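(* Let $q$ be a prime, $n\ge 1$, and let $f:\mathbb{Z}_q^n\to\mathbb{C}$ be any function. Then $$\sum_{k=0}^n\frac{\widehat{A}_k[f]}{(q-1)^k\binom{n}{k}}=\frac{(n+1)(q-1)}{q^{1+n/2}}\sum_{m=0}^n\frac{A_m[f]}{m+1}\left(1-\frac{(-1)^{m+1}}{(q-1)^{m+1}}\right).$$
   Context: For $x=(x_1,\dots,x_n)\in\mathbb{Z}_q^n$ (identified with $GF(q)^n$), the weight ${\rm wt}(x)$ is the number of nonzero coordinates. The inner product is $(x,z)=\sum_i x_iz_i \bmod q$. The Fourier transform of $f$ is $\widehat{f}(z)=q^{-n/2}\sum_{x\in\mathbb{Z}_q^n}f(x)\,\omega^{(x,z)}$ with $\omega=e^{2\pi i/q}$. Define $A_k[f]=\sum_{z:\,{\rm wt}(z)=k}f(z)$ and $\widehat{A}_k[f]=\sum_{z:\,{\rm wt}(z)=k}\widehat{f}(z)$. *)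

theory Defs
  imports "HOL-Analysis.Analysis"
begin

text \<open>Z_q^n is modelled as functions nat \<Rightarrow> nat with values in {0..<q} on
  indices {0..<n} and the default value 0 outside.\<close>

definition vecs :: "nat \<Rightarrow> nat \<Rightarrow> (nat \<Rightarrow> nat) set" where
  "vecs q n = PiE {0..<n} (\<lambda>_. {0..<q})"

definition wt :: "nat \<Rightarrow> (nat \<Rightarrow> nat) \<Rightarrow> nat" where
  "wt n x = card {i \<in> {0..<n}. x i \<noteq> 0}"

definition inner_q :: "nat \<Rightarrow> nat \<Rightarrow> (nat \<Rightarrow> nat) \<Rightarrow> (nat \<Rightarrow> nat) \<Rightarrow> nat" where
  "inner_q q n x z = (\<Sum>i<n. x i * z i) mod q"

definition omega :: "nat \<Rightarrow> complex" where
  "omega q = exp (2 * of_real pi * \<i> / of_nat q)"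

definition fourier :: "nat \<Rightarrow> nat \<Rightarrow> ((nat \<Rightarrow> nat) \<Rightarrow> complex) \<Rightarrow> (nat \<Rightarrow> nat) \<Rightarrow> complex" where
  "fourier q n f z = of_real (real q powr (- real n / 2)) *
     (\<Sum>x\<in>vecs q n. f x * omega q ^ inner_q q n x z)"

definition A_k :: "nat \<Rightarrow> nat \<Rightarrow> ((nat \<Rightarrow> nat) \<Rightarrow> complex) \<Rightarrow> nat \<Rightarrow> complex" where
  "A_k q n f k = (\<Sum>z\<in>{z \<in> vecs q n. wt n z = k}. f z)"

definition Ahat_k :: "nat \<Rightarrow> nat \<Rightarrow> ((nat \<Rightarrow> nat) \<Rightarrow> complex) \<Rightarrow> nat \<Rightarrow> complex" where
  "Ahat_k q n f k = A_k q n (fourier q n f) k"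

end

theory Submission
  imports Defs
begin

text \<open>Write \<open>1 / ((n + 1) * (n choose k))\<close> as the Beta integral
  \<open>\<integral>\<^sub>0\<^sup>1 t ^ k * (1 - t) ^ (n - k)\<close>. The Fourier transform of the weight
  \<open>z \<mapsto> (t / (q - 1)) ^ wt z * (1 - t) ^ (n - wt z)\<close> factorises over the coordinates and
  equals \<open>(1 - q t / (q - 1)) ^ wt x\<close>, because a nontrivial character sums to \<open>-1\<close> over
  the nonzero residues. Integrating over \<open>[0, 1]\<close> therefore evaluates the kernel
  \<open>\<Sum>\<^sub>z \<omega> ^ (x, z) / ((q - 1) ^ wt z * (n choose wt z))\<close> in closed form as a function
  of \<open>wt x\<close> alone, and grouping the vectors by weight turns the Fourier side into the
  weight-class sums \<open>A_k\<close> of \<open>f\<close>.\<close>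

lemma omega_power_eq_1_iff:
  assumes "q > 0"
  shows "omega q ^ j = 1 \<longleftrightarrow> q dvd j"
proof -
  have "omega q ^ j = exp (2 * of_real pi * \<i> * of_nat j / of_nat q)"
    unfolding omega_def exp_of_nat_mult[symmetric] by (simp add: mult_ac)
  then show ?thesis
    using complex_root_unity_eq_1[of q j] assms by simp
qed

lemma omega_power_mod:
  assumes "q > 0"
  shows "omega q ^ (j mod q) = omega q ^ j"
proof -
  have "omega q ^ j = omega q ^ (q * (j div q) + j mod q)"
    by simp
  also have "\<dots> = (omega q ^ q) ^ (j div q) * omega q ^ (j mod q)"
    by (simp only: power_add power_mult)
  finally show ?thesis
    using omega_power_eq_1_iff[OF assms, of q] by simp
qed

lemma sum_omega_power_mult_nonzero:
  assumes "0 < a" "a < q"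
  shows "(\<Sum>b\<in>{1..<q}. omega q ^ (a * b)) = -1"
proof -
  let ?w = "omega q ^ a"
  have "?w \<noteq> 1"
    using omega_power_eq_1_iff[of q a] assms by (auto dest: dvd_imp_le)
  moreover have "?w ^ q = 1"
    using omega_power_eq_1_iff[of q "a * q"] assms by (simp add: power_mult)
  ultimately have "(\<Sum>b<q. ?w ^ b) = 0"
    by (simp add: sum_gp_strict)
  moreover have "{..<q} = insert 0 {1..<q}"
    using assms by auto
  ultimately have "1 + (\<Sum>b\<in>{1..<q}. ?w ^ b) = 0"
    by simp
  then show ?thesis
    by (simp add: power_mult eq_neg_iff_add_eq_0 add.commute)
qed

lemma sum_omega_power_mult_if_zero:
  fixes u v :: complex
  assumes "a < q"
  shows "(\<Sum>b<q. omega q ^ (a * b) * (if b = 0 then u else v)) =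
    (if a = 0 then u + of_nat (q - 1) * v else u - v)"
proof -
  have "{..<q} = insert 0 {1..<q}"
    using assms by auto
  then have "(\<Sum>b<q. omega q ^ (a * b) * (if b = 0 then u else v)) =
      u + (\<Sum>b\<in>{1..<q}. omega q ^ (a * b)) * v"
    by (simp add: sum_distrib_right)
  then show ?thesis
    using sum_omega_power_mult_nonzero[of a q] assms by simp
qed

lemma prod_if_zero_eq_wt:
  fixes u v :: "'a::comm_monoid_mult"
  shows "(\<Prod>i<n. if z i = 0 then u else v) = u ^ (n - wt n z) * v ^ wt n z"
proof -
  have "(\<Prod>i<n. if z i = 0 then u else v) =
      (\<Prod>i\<in>{..<n} \<inter> {i. z i = 0}. u) * (\<Prod>i\<in>{..<n} \<inter> - {i. z i = 0}. v)"
    by (rule prod.If_cases) simp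
  moreover have "{..<n} \<inter> - {i. z i = 0} = {i \<in> {0..<n}. z i \<noteq> 0}"
    by auto
  moreover have "{..<n} \<inter> {i. z i = 0} = {..<n} - {i \<in> {0..<n}. z i \<noteq> 0}"
    by auto
  moreover have "card ({..<n} - {i \<in> {0..<n}. z i \<noteq> 0}) = n - wt n z"
    unfolding wt_def by (subst card_Diff_subset) auto
  ultimately show ?thesis
    by (simp add: wt_def)
qed

lemma wt_le: "wt n z \<le> n"
  unfolding wt_def by (rule order.trans[OF card_mono[of "{0..<n}"]]) auto

lemma finite_vecs: "finite (vecs q n)"
  unfolding vecs_def by (simp add: finite_PiE)

lemma sum_omega_inner_wt_powers:
  fixes u v :: complex
  assumes "q > 0" and x: "x \<in> vecs q n"
  shows "(\<Sum>z\<in>vecs q n. omega q ^ inner_q q n x z * (u ^ (n - wt n z) * v ^ wt n z)) =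
    (u + of_nat (q - 1) * v) ^ (n - wt n x) * (u - v) ^ wt n x"
proof -
  define F where "F i b = omega q ^ (x i * b) * (if b = 0 then u else v)" for i b
  have "omega q ^ inner_q q n x z * (u ^ (n - wt n z) * v ^ wt n z) = (\<Prod>i<n. F i (z i))" for z
    using assms unfolding F_def inner_q_def
    by (simp add: omega_power_mod power_sum prod.distrib prod_if_zero_eq_wt)
  then have "(\<Sum>z\<in>vecs q n. omega q ^ inner_q q n x z * (u ^ (n - wt n z) * v ^ wt n z)) =
      (\<Prod>i<n. \<Sum>b<q. F i b)"
    unfolding vecs_def by (simp add: prod_sum_PiE atLeast0LessThan lessThan_def)
  also have "\<dots> = (\<Prod>i<n. if x i = 0 then u + of_nat (q - 1) * v else u - v)"
    using x unfolding F_def vecs_def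
    by (intro prod.cong refl sum_omega_power_mult_if_zero) (auto simp: PiE_iff)
  finally show ?thesis
    by (simp add: prod_if_zero_eq_wt)
qed

lemma has_integral_Beta_nat:
  assumes "k \<le> n"
  shows "((\<lambda>t::real. t ^ k * (1 - t) ^ (n - k)) has_integral
    1 / ((real n + 1) * real (n choose k))) {0..1}"
proof -
  have "Beta (real (k + 1)) (real (n - k + 1)) = fact k * fact (n - k) / fact (n + 1)"
    using assms unfolding Beta_def by (simp flip: Gamma_fact add: add.commute of_nat_diff)
  also have "\<dots> = 1 / ((real n + 1) * real (n choose k))"
    using assms by (simp add: binomial_fact field_simps)
  finally have "((\<lambda>t. t powr (real (k + 1) - 1) * (1 - t) powr (real (n - k + 1) - 1)) has_integral
      1 / ((real n + 1) * real (n choose k))) {0<..<1}"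
    using has_integral_Beta_real[of "real (k + 1)" "real (n - k + 1)"]
    by (simp add: has_integral_Icc_iff_Ioo)
  then have "((\<lambda>t::real. t ^ k * (1 - t) ^ (n - k)) has_integral
      1 / ((real n + 1) * real (n choose k))) {0<..<1}"
    by (rule has_integral_eq[rotated]) (auto simp: powr_realpow)
  then show ?thesis
    by (simp add: has_integral_Icc_iff_Ioo)
qed

lemma has_integral_one_minus_mult_power:
  fixes b :: real
  assumes "b \<noteq> 0"
  shows "((\<lambda>t. (1 - b * t) ^ m) has_integral (1 - (1 - b) ^ (m + 1)) / (b * (real m + 1))) {0..1}"
proof -
  have nonzero: "b * (real m + 1) \<noteq> 0"
    using assms by simp
  define c where "c = - 1 / (b * (real m + 1))"
  define F where "F t = c * (1 - b * t) ^ (m + 1)" for t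
  have "((\<lambda>t. (1 - b * t) ^ m) has_integral F 1 - F 0) {0..1}"
  proof (rule fundamental_theorem_of_calculus)
    fix t :: real
    have "((\<lambda>t. (1 - b * t) ^ (m + 1)) has_real_derivative
        real (m + 1) * (1 - b * t) ^ m * (- b)) (at t)"
      by (rule derivative_eq_intros refl | simp)+
    then have "(F has_real_derivative c * (real (m + 1) * (1 - b * t) ^ m * (- b))) (at t)"
      unfolding F_def by (rule DERIV_cmult)
    moreover have "c * (real (m + 1) * (1 - b * t) ^ m * (- b)) = (1 - b * t) ^ m"
      using nonzero unfolding c_def by (simp add: field_simps)
    ultimately show "(F has_vector_derivative (1 - b * t) ^ m) (at t within {0..1})"
      by (simp add: has_real_derivative_iff_has_vector_derivative has_vector_derivative_at_within)
  qed simp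
  moreover have "F 1 - F 0 = (1 - (1 - b) ^ (m + 1)) / (b * (real m + 1))"
    unfolding F_def c_def by (simp add: diff_divide_distrib)
  ultimately show ?thesis
    by simp
qed

lemma has_integral_sum_omega_inner_wt:
  assumes "q \<ge> 2" and x: "x \<in> vecs q n"
  defines "r \<equiv> real (q - 1)"
  shows "((\<lambda>t. complex_of_real ((1 - real q / r * t) ^ wt n x)) has_integral
      (\<Sum>z\<in>vecs q n. omega q ^ inner_q q n x z /
         (of_nat (q - 1) ^ wt n z * of_nat (n choose wt n z))) / of_nat (n + 1)) {0..1}"
proof -
  have r: "r > 0" "real q = r + 1"
    using assms(1) unfolding r_def by (auto simp: of_nat_diff)
  have "((\<lambda>t. (1 - t) ^ (n - wt n z) * (t / r) ^ wt n z) has_integral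
      1 / ((real n + 1) * real (n choose wt n z) * r ^ wt n z)) {0..1}" for z
  proof -
    have "((\<lambda>t. t ^ wt n z * (1 - t) ^ (n - wt n z) * (1 / r ^ wt n z)) has_integral
        1 / ((real n + 1) * real (n choose wt n z)) * (1 / r ^ wt n z)) {0..1}"
      by (intro has_integral_mult_left has_integral_Beta_nat wt_le)
    then show ?thesis
      by (simp add: power_divide mult.commute)
  qed
  then have "((\<lambda>t. \<Sum>z\<in>vecs q n. omega q ^ inner_q q n x z *
        of_real ((1 - t) ^ (n - wt n z) * (t / r) ^ wt n z)) has_integral
      (\<Sum>z\<in>vecs q n. omega q ^ inner_q q n x z *
         of_real (1 / ((real n + 1) * real (n choose wt n z) * r ^ wt n z)))) {0..1}"
    by (intro has_integral_sum finite_vecs has_integral_mult_right has_integral_of_real)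
  moreover have "(\<Sum>z\<in>vecs q n. omega q ^ inner_q q n x z *
         of_real (1 / ((real n + 1) * real (n choose wt n z) * r ^ wt n z))) =
      (\<Sum>z\<in>vecs q n. omega q ^ inner_q q n x z /
         (of_nat (q - 1) ^ wt n z * of_nat (n choose wt n z))) / of_nat (n + 1)"
    unfolding sum_divide_distrib r_def by (intro sum.cong refl) (simp add: field_simps)
  moreover have "(\<Sum>z\<in>vecs q n. omega q ^ inner_q q n x z *
        of_real ((1 - t) ^ (n - wt n z) * (t / r) ^ wt n z)) =
      of_real ((1 - real q / r * t) ^ wt n x)" for t
  proof -
    have "complex_of_real (1 - t + r * (t / r)) = 1"
      using r by simp
    then have sum_one: "complex_of_real (1 - t) + of_nat (q - 1) * of_real (t / r) = 1"
      using assms(1) unfolding r_def by simp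
    have "1 - t - t / r = 1 - real q / r * t"
      using r by (simp add: field_simps)
    then have difference: "complex_of_real (1 - t) - of_real (t / r) = of_real (1 - real q / r * t)"
      by (metis of_real_diff)
    have "(\<Sum>z\<in>vecs q n. omega q ^ inner_q q n x z *
        of_real ((1 - t) ^ (n - wt n z) * (t / r) ^ wt n z)) =
      (\<Sum>z\<in>vecs q n. omega q ^ inner_q q n x z *
        (of_real (1 - t) ^ (n - wt n z) * of_real (t / r) ^ wt n z))"
      by (simp only: of_real_mult of_real_power)
    also have "\<dots> = (of_real (1 - t) + of_nat (q - 1) * of_real (t / r)) ^ (n - wt n x) *
        (of_real (1 - t) - of_real (t / r)) ^ wt n x"
      using assms(1) x by (intro sum_omega_inner_wt_powers) auto
    also have "\<dots> = of_real ((1 - real q / r * t) ^ wt n x)"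
      unfolding sum_one difference by simp
    finally show ?thesis .
  qed
  ultimately show ?thesis
    by simp
qed

lemma sum_omega_inner_div_wt_binomial:
  assumes "q \<ge> 2" and x: "x \<in> vecs q n"
  defines "m \<equiv> wt n x"
  shows "(\<Sum>z\<in>vecs q n. omega q ^ inner_q q n x z /
            (of_nat (q - 1) ^ wt n z * of_nat (n choose wt n z))) =
    of_real ((real n + 1) * (real q - 1) / real q) / of_nat (m + 1) *
      (1 - (-1) ^ (m + 1) / of_nat (q - 1) ^ (m + 1))"
    (is "?S = _")
proof -
  define r where "r = real (q - 1)"
  define b where "b = real q / r"
  define I where "I = (1 - (1 - b) ^ (m + 1)) / (b * (real m + 1))"
  have r: "r > 0" "real q - 1 = r"
    using assms(1) unfolding r_def by (auto simp: of_nat_diff)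
  have "b \<noteq> 0"
    using r unfolding b_def by simp
  have "((\<lambda>t. complex_of_real ((1 - b * t) ^ m)) has_integral of_real I) {0..1}"
    unfolding I_def by (intro has_integral_of_real has_integral_one_minus_mult_power) fact
  then have "?S / of_nat (n + 1) = of_real I"
    using has_integral_sum_omega_inner_wt[OF assms(1,2)]
    unfolding b_def r_def m_def by (rule has_integral_unique[symmetric])
  then have "?S = of_real ((real n + 1) * I)"
    using of_nat_neq_0[of n, where 'a = complex] by (simp add: nonzero_divide_eq_eq)
  also have "(real n + 1) * I =
      (real n + 1) * (real q - 1) / real q / real (m + 1) * (1 - (-1) ^ (m + 1) / r ^ (m + 1))"
  proof -
    define X where "X = 1 - (-1) ^ (m + 1) / r ^ (m + 1)"
    have "1 - b = -1 / r"
      using r unfolding b_def by (simp add: field_simps)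
    then have "I = X / (b * (real m + 1))"
      unfolding I_def X_def by (simp only: power_divide)
    then show ?thesis
      using r unfolding b_def X_def[symmetric] by (simp add: field_simps)
  qed
  finally show ?thesis
    unfolding r_def by simp
qed

lemma sum_A_k_mult_eq_sum_wt:
  "(\<Sum>k=0..n. A_k q n h k * g k) = (\<Sum>z\<in>vecs q n. h z * g (wt n z))"
proof -
  have "(\<Sum>z\<in>vecs q n. h z * g (wt n z)) =
      (\<Sum>k=0..n. \<Sum>z\<in>{z \<in> vecs q n. wt n z = k}. h z * g (wt n z))"
    by (rule sum.group[symmetric]) (auto simp: finite_vecs wt_le)
  also have "\<dots> = (\<Sum>k=0..n. A_k q n h k * g k)"
    unfolding A_k_def sum_distrib_right by (intro sum.cong refl) auto
  finally show ?thesis ..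
qed

lemma sum_fourier_mult:
  "(\<Sum>z\<in>vecs q n. fourier q n h z * g z) =
    of_real (real q powr (- real n / 2)) *
      (\<Sum>x\<in>vecs q n. h x * (\<Sum>z\<in>vecs q n. omega q ^ inner_q q n x z * g z))"
proof -
  have "(\<Sum>z\<in>vecs q n. fourier q n h z * g z) =
      of_real (real q powr (- real n / 2)) *
        (\<Sum>z\<in>vecs q n. \<Sum>x\<in>vecs q n. h x * (omega q ^ inner_q q n x z * g z))"
    unfolding fourier_def sum_distrib_left sum_distrib_right by (simp add: mult_ac)
  also have "\<dots> = of_real (real q powr (- real n / 2)) *
      (\<Sum>x\<in>vecs q n. h x * (\<Sum>z\<in>vecs q n. omega q ^ inner_q q n x z * g z))"
    by (subst sum.swap) (simp add: sum_distrib_left)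
  finally show ?thesis .
qed

lemma powr_neg_half_mult_divide:
  fixes q n c :: real
  assumes "q > 0"
  shows "q powr (- n / 2) * (c / q) = c / q powr (1 + n / 2)"
proof -
  have "q powr (1 + n / 2) = q * q powr (n / 2)"
    using assms by (simp add: powr_add)
  moreover have "q powr (- n / 2) = 1 / q powr (n / 2)"
    by (simp add: powr_minus_divide)
  ultimately show ?thesis
    by simp
qed

theorem lemma1:
  fixes q n :: nat and f :: "(nat \<Rightarrow> nat) \<Rightarrow> complex"
  assumes "prime q" and "n \<ge> 1"
  shows "(\<Sum>k=0..n. Ahat_k q n f k / (of_nat (q - 1) ^ k * of_nat (n choose k))) =
    of_real ((real n + 1) * (real q - 1) / real q powr (1 + real n / 2)) *
    (\<Sum>m=0..n. A_k q n f m / of_nat (m + 1) *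
       (1 - (-1) ^ (m + 1) / of_nat (q - 1) ^ (m + 1)))"
proof -
  have q: "q \<ge> 2"
    using assms(1) by (rule prime_ge_2_nat)
  define W where "W k = 1 / (of_nat (q - 1) ^ k * of_nat (n choose k) :: complex)" for k
  define E where "E m = (1 - (-1) ^ (m + 1) / of_nat (q - 1) ^ (m + 1) :: complex)" for m
  define D where "D = (real n + 1) * (real q - 1)"
  have "(\<Sum>k=0..n. Ahat_k q n f k / (of_nat (q - 1) ^ k * of_nat (n choose k))) =
      (\<Sum>k=0..n. A_k q n (fourier q n f) k * W k)"
    unfolding Ahat_k_def W_def by simp
  also have "\<dots> = of_real (real q powr (- real n / 2)) *
      (\<Sum>x\<in>vecs q n. f x * (\<Sum>z\<in>vecs q n. omega q ^ inner_q q n x z * W (wt n z)))"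
    unfolding sum_A_k_mult_eq_sum_wt sum_fourier_mult ..
  also have "\<dots> = of_real (real q powr (- real n / 2)) *
      (\<Sum>x\<in>vecs q n. f x * (of_real (D / real q) / of_nat (wt n x + 1) * E (wt n x)))"
    using sum_omega_inner_div_wt_binomial[OF q] unfolding W_def E_def D_def by simp
  also have "\<dots> = of_real (real q powr (- real n / 2)) *
      (\<Sum>m=0..n. A_k q n f m * (of_real (D / real q) / of_nat (m + 1) * E m))"
    unfolding sum_A_k_mult_eq_sum_wt ..
  also have "\<dots> = of_real (real q powr (- real n / 2) * (D / real q)) *
      (\<Sum>m=0..n. A_k q n f m / of_nat (m + 1) * E m)"
    unfolding sum_distrib_left of_real_mult
    by (intro sum.cong refl) (simp only: times_divide_eq_left times_divide_eq_right mult_ac)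
  also have "real q powr (- real n / 2) * (D / real q) = D / real q powr (1 + real n / 2)"
    using q by (intro powr_neg_half_mult_divide) simp
  finally show ?thesis
    unfolding D_def E_def .
qed

end
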